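(* Let $m=2k$ with $k\in\mathbb{N}$. For every $\beta\in(k+1,m+1]$ there exists $x\in(0,\frac{m}{\beta-1})$ with a unique $\beta$-expansion, i.e. $|\Sigma_{\beta,m}(x)|=1$.
   Context: $\Sigma_{\beta,m}(x)=\{(\epsilon_i)_{i=1}^\infty\in\{0,\ldots,m\}^{\mathbb{N}}:\sum_{i\ge1}\epsilon_i\beta^{-i}=x\}$; its elements are the $\beta$-expansions of $x$. *)

theory Defs
  imports "HOL-Analysis.Analysis"
begin

text \<open>beta-expansions of x with digit alphabet {0..m}. A sequence
  (eps_1, eps_2, ...) is represented 0-indexed as e :: nat => nat with
  e n = eps_(n+1), so the value is sum_n e n * beta^-(n+1).\<close>
definition beta_expansions :: "real \<Rightarrow> nat \<Rightarrow> real \<Rightarrow> (nat \<Rightarrow> nat) set" where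
  "beta_expansions \<beta> m x =
     {e. (\<forall>i. e i \<le> m) \<and> (\<lambda>i. real (e i) / \<beta> ^ (Suc i)) sums x}"

end

theory Submission
  imports Defs
begin

text \<open>The constant digit string \<open>c, c, c, \<dots>\<close> represents \<open>c / (\<beta> - 1)\<close>. Any other expansion of
  that number with digits in \<open>{0..m}\<close> differs from it digitwise by integers of absolute value at
  most \<open>max c (m - c)\<close>, and these differences again form a zero-valued expansion. Multiplying by
  \<open>\<beta>\<close> and dropping the first digit keeps the value zero, so each first difference equals minus a
  tail value, which has absolute value at most \<open>max c (m - c) / (\<beta> - 1) < 1\<close>; being an integer,
  it is zero. For \<open>m = 2k\<close> and \<open>\<beta> > k + 1\<close> this applies with \<open>c = k\<close>.\<close>

lemma sums_const_div_power_Suc: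
  fixes \<beta> c :: real
  assumes "1 < \<beta>"
  shows "(\<lambda>i. c / \<beta> ^ Suc i) sums (c / (\<beta> - 1))"
proof -
  have "(\<lambda>i. (1 / \<beta>) ^ i) sums (1 / (1 - 1 / \<beta>))"
    by (rule geometric_sums) (use assms in auto)
  then have "(\<lambda>i. c / \<beta> * (1 / \<beta>) ^ i) sums (c / \<beta> * (1 / (1 - 1 / \<beta>)))"
    by (rule sums_mult)
  moreover have "c / \<beta> * (1 / (1 - 1 / \<beta>)) = c / (\<beta> - 1)"
    using assms by (simp add: field_simps)
  moreover have "(\<lambda>i. c / \<beta> * (1 / \<beta>) ^ i) = (\<lambda>i. c / \<beta> ^ Suc i)"
    by (simp add: power_divide)
  ultimately show ?thesis
    by metis
qed

lemma sums_div_power_Suc_abs_le: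
  fixes \<beta> c s :: real and d :: "nat \<Rightarrow> real"
  assumes "1 < \<beta>" and "\<And>i. \<bar>d i\<bar> \<le> c"
    and "(\<lambda>i. d i / \<beta> ^ Suc i) sums s"
  shows "\<bar>s\<bar> \<le> c / (\<beta> - 1)"
proof -
  have "- c \<le> d i" "d i \<le> c" and "0 < \<beta> ^ Suc i" for i
    using assms(1) assms(2)[of i] by (auto simp: abs_le_iff)
  then have "- (c / \<beta> ^ Suc i) \<le> d i / \<beta> ^ Suc i" "d i / \<beta> ^ Suc i \<le> c / \<beta> ^ Suc i" for i
    by (metis divide_right_mono less_le minus_divide_left)+
  then have "s \<le> c / (\<beta> - 1)" and "- (c / (\<beta> - 1)) \<le> s"
    using sums_le[OF _ assms(3) sums_const_div_power_Suc[OF assms(1)]]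
      sums_le[OF _ sums_minus[OF sums_const_div_power_Suc[OF assms(1)]] assms(3)] by auto
  then show ?thesis
    by (simp add: abs_le_iff)
qed

lemma sums_div_power_Suc_shift:
  fixes \<beta> s :: real and d :: "nat \<Rightarrow> real"
  assumes "\<beta> \<noteq> 0" and "(\<lambda>i. d i / \<beta> ^ Suc i) sums s"
  shows "(\<lambda>i. d (Suc i) / \<beta> ^ Suc i) sums (\<beta> * s - d 0)"
proof -
  have "(\<lambda>i. \<beta> * (d i / \<beta> ^ Suc i)) sums (\<beta> * s)"
    using assms(2) by (rule sums_mult)
  then have "(\<lambda>i. d i / \<beta> ^ i) sums (\<beta> * s)"
    using assms(1) by simp
  then show ?thesis
    using sums_Suc_iff[of "\<lambda>i. d i / \<beta> ^ i" "\<beta> * s - d 0"] by simp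
qed

lemma small_integer_digits_sums_zero_first:
  fixes \<beta> c :: real and d :: "nat \<Rightarrow> int"
  assumes "1 < \<beta>" and "c / (\<beta> - 1) < 1" and "\<And>i. \<bar>d i\<bar> \<le> c"
    and "(\<lambda>i. d i / \<beta> ^ Suc i) sums 0"
  shows "d 0 = 0"
proof -
  have "(\<lambda>i. d (Suc i) / \<beta> ^ Suc i) sums (- d 0)"
    using sums_div_power_Suc_shift[OF _ assms(4)] assms(1) by simp
  then have "\<bar>real_of_int (- d 0)\<bar> \<le> c / (\<beta> - 1)"
    using sums_div_power_Suc_abs_le assms(1,3) by (metis of_int_abs)
  then have "\<bar>d 0\<bar> < 1"
    using assms(2) by linarith
  then show ?thesis
    by linarith
qed

lemma small_integer_digits_sums_zero:
  fixes \<beta> c :: real and d :: "nat \<Rightarrow> int"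
  assumes "1 < \<beta>" and "c / (\<beta> - 1) < 1" and "\<And>i. \<bar>d i\<bar> \<le> c"
    and "(\<lambda>i. d i / \<beta> ^ Suc i) sums 0"
  shows "d n = 0"
  using assms(3,4)
proof (induction n arbitrary: d)
  case 0
  then show ?case
    using small_integer_digits_sums_zero_first assms(1,2) by blast
next
  case (Suc n)
  have "d 0 = 0"
    using small_integer_digits_sums_zero_first assms(1,2) Suc.prems by blast
  then have "(\<lambda>i. d (Suc i) / \<beta> ^ Suc i) sums 0"
    using sums_div_power_Suc_shift[OF _ Suc.prems(2)] assms(1) by simp
  then show ?case
    using Suc.IH[of "\<lambda>i. d (Suc i)"] Suc.prems(1) by blast
qed

lemma beta_expansions_const:
  fixes \<beta> :: real and c m :: nat
  assumes "1 < \<beta>" and "c \<le> m" and "real c < \<beta> - 1" and "real (m - c) < \<beta> - 1"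
  shows "beta_expansions \<beta> m (c / (\<beta> - 1)) = {\<lambda>_. c}"
proof (intro equalityI subsetI)
  fix e
  assume "e \<in> beta_expansions \<beta> m (c / (\<beta> - 1))"
  then have digits: "\<And>i. e i \<le> m" and e_sums: "(\<lambda>i. e i / \<beta> ^ Suc i) sums (c / (\<beta> - 1))"
    unfolding beta_expansions_def by auto
  define d where "d i = int (e i) - int c" for i
  have "(\<lambda>i. d i / \<beta> ^ Suc i) sums 0"
    using sums_diff[OF e_sums sums_const_div_power_Suc[OF assms(1), of c]]
    by (simp add: d_def diff_divide_distrib)
  moreover have "\<bar>d i\<bar> \<le> real (max c (m - c))" for i
    using digits[of i] by (auto simp: d_def)
  moreover have "real (max c (m - c)) / (\<beta> - 1) < 1"
    using assms by (simp add: max_def)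
  ultimately have "d i = 0" for i
    using small_integer_digits_sums_zero assms(1) by blast
  then show "e \<in> {\<lambda>_. c}"
    by (auto simp: d_def)
next
  fix e
  assume "e \<in> {\<lambda>_::nat. c}"
  then show "e \<in> beta_expansions \<beta> m (c / (\<beta> - 1))"
    using sums_const_div_power_Suc[OF assms(1)] assms(2) by (auto simp: beta_expansions_def)
qed

theorem proposition3p2:
  fixes k m :: nat and \<beta> :: real
  assumes "m = 2 * k"
    and "real k + 1 < \<beta>" and "\<beta> \<le> real m + 1"
  shows "\<exists>x. 0 < x \<and> x < real m / (\<beta> - 1) \<and> card (beta_expansions \<beta> m x) = 1"
proof -
  have "1 < \<beta>" and "0 < k"
    using assms by linarith+
  then have "beta_expansions \<beta> m (k / (\<beta> - 1)) = {\<lambda>_. k}"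
    using assms by (intro beta_expansions_const) auto
  moreover have "0 < k / (\<beta> - 1)" and "k / (\<beta> - 1) < m / (\<beta> - 1)"
    using \<open>1 < \<beta>\<close> \<open>0 < k\<close> assms(1) by (auto simp: divide_strict_right_mono)
  ultimately show ?thesis
    by auto
qed

end
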